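(* Let $m\ge3$, $X=\{0,1,\dots,m-1\}$, $a_m=(0\,1\,\cdots\,m{-}1)$ and $a_2=(0\,1)$. Let $G=\langle A\cup B\rangle$ be a CS group with rooted group $A=\mathrm{Sym}(X)$ acting naturally, and suppose $B$ has a generating set $S$ such that, among the family of sections $(b|_x)_{b\in S,\,x\in\dot X}$, exactly one entry equals $a_m$, exactly two entries equal $a_2$, and all other entries are trivial. Then $G$ is not periodic.
   Context: $X^*$ is the free monoid on $X$ viewed as a rooted tree with distinguished letter $0$, $\dot X=X\setminus\{0\}$; $\mathrm{Aut}(X^* )$ acts on the right; sections are defined by $(u\star v).g=u.g\star v.(g|_u)$; permutations of $X$ are rooted automorphisms; $\mathrm{St}(1)$ is the first layer stabiliser. A CS group is $\langle A\cup B\rangle$ with $A\le\mathrm{Sym}(X)$ transitive and $B\le\mathrm{St}(1)$ such that $b|_0=b$ for all $b\in B$ and the elements $b|_x$ ($b\in B$, $x\in\dot X$) lie in $A$ and generate $A$. Periodic: every element has finite order. *)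

theory Defs
  imports "HOL-Combinatorics.Permutations"
begin

text \<open>The action is a right action, so u.(gh) = h (g u), i.e. gh is  h \<circ> g.\<close>

definition words :: "nat \<Rightarrow> nat list set" where
  "words m = {w. set w \<subseteq> {..<m}}"

definition is_aut :: "nat \<Rightarrow> (nat list \<Rightarrow> nat list) \<Rightarrow> bool" where
  "is_aut m g \<longleftrightarrow> bij_betw g (words m) (words m)
     \<and> (\<forall>w\<in>words m. length (g w) = length w)
     \<and> (\<forall>u\<in>words m. \<forall>v\<in>words m. take (length u) (g (u @ v)) = g u)
     \<and> (\<forall>w. w \<notin> words m \<longrightarrow> g w = w)"

definition Aut :: "nat \<Rightarrow> (nat list \<Rightarrow> nat list) set" where
  "Aut m = {g. is_aut m g}"

text \<open>Section g|_u, defined by (u v).g = (u.g)(v.(g|_u)).\<close>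
definition sec :: "nat \<Rightarrow> (nat list \<Rightarrow> nat list) \<Rightarrow> nat list \<Rightarrow> (nat list \<Rightarrow> nat list)" where
  "sec m g u = (\<lambda>v. if v \<in> words m then drop (length u) (g (u @ v)) else v)"

definition rooted :: "nat \<Rightarrow> (nat \<Rightarrow> nat) \<Rightarrow> (nat list \<Rightarrow> nat list)" where
  "rooted m \<sigma> = (\<lambda>w. if w \<in> words m then (case w of [] \<Rightarrow> [] | x # v \<Rightarrow> \<sigma> x # v) else w)"

definition SymRooted :: "nat \<Rightarrow> (nat list \<Rightarrow> nat list) set" where
  "SymRooted m = {rooted m \<sigma> | \<sigma>. \<sigma> permutes {..<m}}"

definition St1 :: "nat \<Rightarrow> (nat list \<Rightarrow> nat list) set" where
  "St1 m = {g \<in> Aut m. \<forall>x<m. g [x] = [x]}"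

inductive_set gen :: "('a \<Rightarrow> 'a) set \<Rightarrow> ('a \<Rightarrow> 'a) set" for S where
  gen_id: "id \<in> gen S"
| gen_mult: "g \<in> gen S \<Longrightarrow> s \<in> S \<Longrightarrow> s \<circ> g \<in> gen S"
| gen_inv: "g \<in> gen S \<Longrightarrow> s \<in> S \<Longrightarrow> inv s \<circ> g \<in> gen S"

definition periodic :: "('a \<Rightarrow> 'a) set \<Rightarrow> bool" where
  "periodic G \<longleftrightarrow> (\<forall>g\<in>G. \<exists>n>0. g ^^ n = id)"

definition a_cyc :: "nat \<Rightarrow> (nat list \<Rightarrow> nat list)" where
  "a_cyc m = rooted m (\<lambda>x. if x < m then (x + 1) mod m else x)"

definition a_two :: "nat \<Rightarrow> (nat list \<Rightarrow> nat list)" where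
  "a_two m = rooted m (\<lambda>x. if x = 0 then 1 else if x = 1 then 0 else x)"

end

theory Submission
  imports Defs
begin

text \<open>
  Each generator b \<in> S is directed: it fixes the first level, b|_0 = b, and b|_x is the rooted
  automorphism of a permutation p x. Let \<alpha> be a permutation of X under which 0 lies on a cycle
  0 = y_0, y_1, ..., y_n = 0 of length n \<ge> 2, and put g = \<alpha> b (first \<alpha>, then b). Then g^n fixes
  the letter 0 and its section there is the rooted automorphism of p(y_{n-1}) \<circ> \<cdots> \<circ> p(y_1),
  followed by b; if this ordered product of sections equals \<alpha>, the section is g itself. Such a g
  has infinite order: if g^k = 1 then the orbit of 0 forces n | k, and then g^(k/n) = 1, which gives
  an infinite descent.
  Under the hypothesis on S there are only a few configurations of the three nontrivial sections, and
  in each of them a generator or a product of two generators, together with one of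
  \<alpha> = a_m, a_2, a_2 a_m a_2, has this property.
\<close>

lemma words_Cons [simp]: "x # v \<in> words m \<longleftrightarrow> x < m \<and> v \<in> words m"
  by (auto simp: words_def)

lemma words_Nil [simp]: "[] \<in> words m"
  by (simp add: words_def)

lemma rooted_Cons [simp]: "x < m \<Longrightarrow> v \<in> words m \<Longrightarrow> rooted m f (x # v) = f x # v"
  by (simp add: rooted_def)

lemma rooted_outside_words: "w \<notin> words m \<Longrightarrow> rooted m f w = w"
  by (simp add: rooted_def)

lemma rooted_id [simp]: "rooted m id = id"
  by (auto simp: rooted_def split: list.split)

lemma rooted_in_words: "v \<in> words m \<Longrightarrow> \<forall>z<m. f z < m \<Longrightarrow> rooted m f v \<in> words m"
  by (cases v) (auto simp: rooted_def)

lemma rooted_comp: "\<forall>z<m. g z < m \<Longrightarrow> rooted m f \<circ> rooted m g = rooted m (f \<circ> g)"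
proof
  fix w assume "\<forall>z<m. g z < m"
  then show "(rooted m f \<circ> rooted m g) w = rooted m (f \<circ> g) w"
    by (cases w) (auto simp: rooted_def)
qed

fun comp_upto :: "(nat \<Rightarrow> 'a \<Rightarrow> 'a) \<Rightarrow> nat \<Rightarrow> 'a \<Rightarrow> 'a" where
  "comp_upto f 0 = id"
| "comp_upto f (Suc j) = f (Suc j) \<circ> comp_upto f j"

lemma comp_upto_closed: "\<forall>k z. z < m \<longrightarrow> f k z < m \<Longrightarrow> z < m \<Longrightarrow> comp_upto f j z < m"
  by (induction j arbitrary: z) auto

lemma comp_upto_cong: "\<forall>k. 0 < k \<and> k \<le> j \<longrightarrow> f k = g k \<Longrightarrow> comp_upto f j = comp_upto g j"
  by (induction j) auto

lemma comp_upto_trivial_factors: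
  "i \<le> j \<Longrightarrow> \<forall>k. i < k \<and> k \<le> j \<longrightarrow> f k = id \<Longrightarrow> comp_upto f j = comp_upto f i"
  by (induction j) (auto simp: le_Suc_eq)

lemma comp_upto_single_factor:
  assumes "i < q" "q \<le> N" "\<forall>k. i < k \<and> k \<le> N \<and> k \<noteq> q \<longrightarrow> f k = id"
  shows "comp_upto f N = f q \<circ> comp_upto f i"
proof -
  obtain q' where q': "q = Suc q'" using assms(1) by (cases q) auto
  have "comp_upto f N = comp_upto f q"
    using comp_upto_trivial_factors[of q N f] assms by auto
  also have "comp_upto f q' = comp_upto f i"
    using comp_upto_trivial_factors[of i q' f] assms q' by auto
  ultimately show ?thesis using q' by simp
qed

lemma comp_upto_one_factor:
  "0 < q \<Longrightarrow> q \<le> N \<Longrightarrow> \<forall>k. 0 < k \<and> k \<le> N \<and> k \<noteq> q \<longrightarrow> f k = id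
    \<Longrightarrow> comp_upto f N = f q"
  using comp_upto_single_factor[of 0 q N f] by simp

lemma comp_upto_two_factors:
  "0 < q1 \<Longrightarrow> q1 < q2 \<Longrightarrow> q2 \<le> N \<Longrightarrow> \<forall>k. 0 < k \<and> k \<le> N \<and> k \<notin> {q1, q2} \<longrightarrow> f k = id
    \<Longrightarrow> comp_upto f N = f q2 \<circ> f q1"
  using comp_upto_single_factor[of q1 q2 N f] comp_upto_one_factor[of q1 q1 f] by simp

lemma comp_upto_three_factors:
  "0 < q1 \<Longrightarrow> q1 < q2 \<Longrightarrow> q2 < q3 \<Longrightarrow> q3 \<le> N
    \<Longrightarrow> \<forall>k. 0 < k \<and> k \<le> N \<and> k \<notin> {q1, q2, q3} \<longrightarrow> f k = id
    \<Longrightarrow> comp_upto f N = f q3 \<circ> f q2 \<circ> f q1"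
  using comp_upto_single_factor[of q2 q3 N f] comp_upto_two_factors[of q1 q2 q2 f]
  by (simp add: o_assoc)

definition infinite_order :: "('a \<Rightarrow> 'a) \<Rightarrow> bool" where
  "infinite_order g \<longleftrightarrow> (\<forall>k>0. g ^^ k \<noteq> id)"

lemma infinite_order_if_section_recurs:
  fixes g :: "'a list \<Rightarrow> 'a list"
  assumes n: "2 \<le> n"
    and closed: "\<forall>v\<in>W. g v \<in> W" and "[] \<in> W"
    and outside: "\<forall>w. w \<notin> W \<longrightarrow> g w = w"
    and recurs: "\<forall>v\<in>W. (g ^^ n) (a # v) = a # g v"
    and moves: "\<forall>v\<in>W. \<forall>r. 0 < r \<and> r < n \<longrightarrow> hd ((g ^^ r) (a # v)) \<noteq> a"
  shows "infinite_order g"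
proof -
  have power_closed: "(g ^^ q) v \<in> W" if "v \<in> W" for q v
    using that closed by (induction q) auto
  have power_outside: "(g ^^ q) w = w" if "w \<notin> W" for q w
    using that outside by (induction q) auto
  have power_recurs: "(g ^^ (q * n)) (a # v) = a # (g ^^ q) v" if "v \<in> W" for q v
    using that by (induction q) (auto simp: funpow_add power_closed recurs)
  have "g ^^ k \<noteq> id" if "0 < k" for k
    using that
  proof (induction k rule: less_induct)
    case (less k)
    show ?case
    proof
      assume id: "g ^^ k = id"
      define q r where "q = k div n" and "r = k mod n"
      have k: "k = r + q * n" and "r < n" using n by (simp_all add: q_def r_def)
      have "[a] = (g ^^ r) ((g ^^ (q * n)) [a])"
        using id by (metis comp_apply funpow_add id_apply k)
      also have "\<dots> = (g ^^ r) (a # (g ^^ q) [])"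
        using power_recurs \<open>[] \<in> W\<close> by simp
      finally have "hd ((g ^^ r) (a # (g ^^ q) [])) = a"
        by (metis list.sel(1))
      then have "r = 0"
        using moves power_closed[OF \<open>[] \<in> W\<close>] \<open>r < n\<close> by fastforce
      then have "0 < q" "q < k" using less.prems k n by auto
      moreover have "g ^^ q = id"
      proof
        fix w show "(g ^^ q) w = id w"
          using id power_recurs[of w q] power_outside[of w q] by (cases "w \<in> W") (auto simp: k \<open>r = 0\<close>)
      qed
      ultimately show False using less.IH by blast
    qed
  qed
  then show ?thesis by (simp add: infinite_order_def)
qed

definition directed :: "nat \<Rightarrow> (nat list \<Rightarrow> nat list) \<Rightarrow> (nat \<Rightarrow> nat \<Rightarrow> nat) \<Rightarrow> bool" where
  "directed m b p \<longleftrightarrow> (\<forall>v\<in>words m. b (0 # v) = 0 # b v)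
    \<and> (\<forall>x\<in>{1..<m}. \<forall>v\<in>words m. b (x # v) = x # rooted m (p x) v)
    \<and> (\<forall>v\<in>words m. b v \<in> words m) \<and> (\<forall>w. w \<notin> words m \<longrightarrow> b w = w)
    \<and> (\<forall>x z. z < m \<longrightarrow> p x z < m)"

lemma directed_comp:
  assumes "directed m b p" "directed m b' p'"
  shows "directed m (b \<circ> b') (\<lambda>x. p x \<circ> p' x)"
proof -
  have "(b \<circ> b') (x # v) = x # rooted m (p x \<circ> p' x) v" if "x \<in> {1..<m}" "v \<in> words m" for x v
  proof -
    have "\<forall>z<m. p' x z < m" using assms(2) by (simp add: directed_def)
    then show ?thesis
      using assms that rooted_in_words rooted_comp[of m "p' x" "p x"]
      by (simp add: directed_def) (metis comp_apply)
  qed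
  then show ?thesis using assms by (simp add: directed_def)
qed

lemma infinite_order_directed:
  assumes b: "directed m b p"
    and \<alpha>: "\<forall>z<m. \<alpha> z < m"
    and y: "y 0 = 0" "y n = 0" "\<forall>j. 0 < j \<and> j < n \<longrightarrow> y j \<noteq> 0" "\<forall>j\<le>n. y j < m"
      "\<forall>j<n. \<alpha> (y j) = y (Suc j)"
    and n: "2 \<le> n"
    and product: "comp_upto (p \<circ> y) (n - 1) = \<alpha>"
  shows "infinite_order (b \<circ> rooted m \<alpha>)"
proof -
  let ?g = "b \<circ> rooted m \<alpha>"
  have b0: "\<forall>v\<in>words m. b (0 # v) = 0 # b v"
    and bx: "\<forall>x\<in>{1..<m}. \<forall>v\<in>words m. b (x # v) = x # rooted m (p x) v"
    and bw: "\<forall>v\<in>words m. b v \<in> words m" and bo: "\<forall>w. w \<notin> words m \<longrightarrow> b w = w"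
    and p: "\<forall>x z. z < m \<longrightarrow> p x z < m"
    using b by (simp_all add: directed_def)
  have step: "?g (x # v) = \<alpha> x # (if \<alpha> x = 0 then b v else rooted m (p (\<alpha> x)) v)"
    if "x < m" "v \<in> words m" for x v
    using that b0 bx \<alpha> by auto
  have path_closed: "\<forall>k z. z < m \<longrightarrow> (p \<circ> y) k z < m"
    using p by simp
  have orbit: "(?g ^^ j) (0 # v) = y j # rooted m (comp_upto (p \<circ> y) j) v"
    if "j < n" "v \<in> words m" for j v
    using that
  proof (induction j)
    case 0
    then show ?case using y by (simp add: rooted_def split: list.split)
  next
    case (Suc j)
    let ?w = "rooted m (comp_upto (p \<circ> y) j) v"
    have w: "?w \<in> words m"
      using rooted_in_words[OF Suc.prems(2)] comp_upto_closed[OF path_closed] by blast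
    have "(?g ^^ Suc j) (0 # v) = ?g (y j # ?w)"
      using Suc.IH Suc.prems by (metis Suc_lessD funpow.simps(2) o_apply)
    also have "\<dots> = y (Suc j) # rooted m (p (y (Suc j))) ?w"
      using step[OF _ w, of "y j"] y Suc.prems(1) by simp
    also have "rooted m (p (y (Suc j))) ?w = rooted m (comp_upto (p \<circ> y) (Suc j)) v"
      using rooted_comp[of m "comp_upto (p \<circ> y) j" "p (y (Suc j))"]
        comp_upto_closed[OF path_closed] by (simp add: fun_eq_iff)
    finally show ?case .
  qed
  have recurs: "(?g ^^ n) (0 # v) = 0 # ?g v" if "v \<in> words m" for v
  proof -
    obtain n' where n': "n = Suc n'" using n by (cases n) auto
    have "rooted m (comp_upto (p \<circ> y) n') v \<in> words m"
      using rooted_in_words[OF that] comp_upto_closed[OF path_closed] by blast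
    then show ?thesis
      using orbit[of n' v] step[of "y n'"] that y n' product by auto
  qed
  show ?thesis
  proof (rule infinite_order_if_section_recurs[of n "words m"])
    show "\<forall>v\<in>words m. \<forall>r. 0 < r \<and> r < n \<longrightarrow> hd ((?g ^^ r) (0 # v)) \<noteq> 0"
      using orbit y by simp
  qed (use n bw bo \<alpha> rooted_in_words rooted_outside_words recurs in auto)
qed

definition cyc :: "nat \<Rightarrow> nat \<Rightarrow> nat" where
  "cyc m = (\<lambda>x. if x < m then (x + 1) mod m else x)"

lemma cyc_less: "z < m \<Longrightarrow> cyc m z < m"
  by (simp add: cyc_def)

lemma cyc_permutes: "cyc m permutes {..<m}"
proof (rule bij_imp_permutes)
  have "inj_on (cyc m) {..<m}"
  proof (rule inj_onI)
    fix x y assume "x \<in> {..<m}" "y \<in> {..<m}" "cyc m x = cyc m y"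
    then show "x = y"
      by (cases "Suc x = m"; cases "Suc y = m") (auto simp: cyc_def)
  qed
  then show "bij_betw (cyc m) {..<m} {..<m}"
    using endo_inj_surj[of "{..<m}" "cyc m"] cyc_less by (auto simp: bij_betw_def)
qed (simp add: cyc_def)

lemma cyc_mod: "0 < m \<Longrightarrow> cyc m (x mod m) = Suc x mod m"
  by (simp add: cyc_def mod_Suc_eq)

lemma infinite_order_swap:
  assumes "directed m b p" "2 \<le> m" "p 1 = transpose 0 1"
  shows "infinite_order (b \<circ> rooted m (transpose 0 1))"
proof (rule infinite_order_directed[where p = p and y = "\<lambda>j. j mod 2" and n = 2])
  show "\<forall>j::nat. 0 < j \<and> j < 2 \<longrightarrow> j mod 2 \<noteq> 0" "\<forall>j<2. transpose 0 1 (j mod 2) = Suc j mod 2"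
    by (auto simp: less_2_cases_iff)
qed (use assms in \<open>auto simp: transpose_def\<close>)

lemma infinite_order_cycle:
  assumes "directed m b p" "2 \<le> m" "comp_upto p (m - 1) = cyc m"
  shows "infinite_order (b \<circ> rooted m (cyc m))"
proof (rule infinite_order_directed[where p = p and y = "\<lambda>j. j mod m" and n = m])
  have "comp_upto (p \<circ> (\<lambda>j. j mod m)) (m - 1) = comp_upto p (m - 1)"
    by (rule comp_upto_cong) auto
  then show "comp_upto (p \<circ> (\<lambda>j. j mod m)) (m - 1) = cyc m"
    using assms(3) by simp
  show "\<forall>j<m. cyc m (j mod m) = Suc j mod m"
    by (simp add: cyc_def)
qed (use assms in \<open>auto simp: cyc_less\<close>)

text \<open>The orbit of 0 under a_2 a_m a_2 is 0, 2, 3, ..., m - 1, 1, so the sections are met in the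
  order 2, ..., m - 1, 1.\<close>
lemma infinite_order_conj_cycle:
  assumes "directed m b p" "3 \<le> m" "p 1 = id"
    and "comp_upto (\<lambda>k. p (Suc k)) (m - 2) = transpose 0 1 \<circ> cyc m \<circ> transpose 0 1"
  shows "infinite_order (b \<circ> rooted m (transpose 0 1 \<circ> cyc m \<circ> transpose 0 1))"
proof (rule infinite_order_directed[where p = p and y = "\<lambda>j. transpose 0 1 (Suc j mod m)" and n = m])
  let ?y = "\<lambda>j. transpose 0 1 (Suc j mod m)"
  have "comp_upto (p \<circ> ?y) (m - 2) = comp_upto (\<lambda>k. p (Suc k)) (m - 2)"
  proof (rule comp_upto_cong, intro allI impI)
    fix k assume "0 < k \<and> k \<le> m - 2"
    then have "Suc k mod m = Suc k" "Suc k \<noteq> 0" "Suc k \<noteq> 1" using assms(2) by auto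
    then show "(p \<circ> ?y) k = p (Suc k)" by simp
  qed
  moreover have "m - 1 = Suc (m - 2)" "?y (m - 1) = 1"
    using assms(2) by (auto simp: transpose_def)
  ultimately show "comp_upto (p \<circ> ?y) (m - 1) = transpose 0 1 \<circ> cyc m \<circ> transpose 0 1"
    using assms(3,4) by simp
  have swap_less: "transpose 0 1 z < m" if "z < m" for z
    using that assms(2) by (simp add: transpose_def)
  show "\<forall>z<m. (transpose 0 1 \<circ> cyc m \<circ> transpose 0 1) z < m"
    using swap_less cyc_less by simp
  show "\<forall>j\<le>m. ?y j < m"
    using swap_less assms(2) by simp
  show "\<forall>j<m. (transpose 0 1 \<circ> cyc m \<circ> transpose 0 1) (?y j) = ?y (Suc j)"
    using assms(2) by (simp add: cyc_mod)
  show "\<forall>j. 0 < j \<and> j < m \<longrightarrow> ?y j \<noteq> 0"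
  proof (intro allI impI)
    fix j assume "0 < j \<and> j < m"
    then have "Suc j mod m \<noteq> 1"
      using assms(2) by (cases "Suc j = m") auto
    then show "?y j \<noteq> 0" by (simp add: transpose_def)
  qed
qed (use assms(1,2) mod_Suc[of m m] in \<open>simp_all add: transpose_def\<close>)

lemma infinite_order_cycle_section:
  assumes "directed m b p" "2 \<le> m" "x1 \<in> {1..<m}" "p x1 = cyc m" "\<forall>x\<in>{1..<m} - {x1}. p x = id"
  shows "infinite_order (b \<circ> rooted m (cyc m))"
proof (rule infinite_order_cycle[OF assms(1,2)])
  have "comp_upto p (m - 1) = p x1"
    by (rule comp_upto_one_factor) (use assms(3,5) in auto)
  then show "comp_upto p (m - 1) = cyc m"
    using assms(4) by simp
qed

lemma infinite_order_cycle_two_swap_sections: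
  assumes b: "directed m b p" and m: "3 \<le> m"
    and x: "x1 \<in> {1..<m}" "x2 \<in> {2..<m}" "x3 \<in> {2..<m}" "distinct [x1, x2, x3]"
    and p: "p x1 = cyc m" "p x2 = transpose 0 1" "p x3 = transpose 0 1"
      "\<forall>x\<in>{1..<m} - {x1, x2, x3}. p x = id"
  shows "infinite_order (b \<circ> rooted m (cyc m))
    \<or> infinite_order (b \<circ> rooted m (transpose 0 1 \<circ> cyc m \<circ> transpose 0 1))"
proof -
  have ordered_case: ?thesis
    if lt: "x2 < x3" and range: "x2 \<in> {2..<m}" "x3 \<in> {2..<m}" and ne: "x1 \<noteq> x2" "x1 \<noteq> x3"
      and swaps: "p x2 = transpose 0 1" "p x3 = transpose 0 1"
      and others: "\<forall>x\<in>{1..<m} - {x1, x2, x3}. p x = id"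
    for x2 x3
  proof -
    consider "x1 < x2" | "x3 < x1" | "x2 < x1" "x1 < x3"
      using lt ne by (meson linorder_neqE_nat)
    then show ?thesis
    proof cases
      case 1
      then have "comp_upto p (m - 1) = p x3 \<circ> p x2 \<circ> p x1"
        using x(1) that by (intro comp_upto_three_factors) auto
      then show ?thesis
        using infinite_order_cycle[OF b] m p(1) that by simp
    next
      case 2
      then have "comp_upto p (m - 1) = p x1 \<circ> p x3 \<circ> p x2"
        using x(1) that by (intro comp_upto_three_factors) auto
      then show ?thesis
        using infinite_order_cycle[OF b] m p(1) that by (simp add: comp_assoc)
    next
      case 3
      then have "comp_upto (\<lambda>k. p (Suc k)) (m - 2) = p x3 \<circ> p x1 \<circ> p x2"
        using comp_upto_three_factors[of "x2 - 1" "x1 - 1" "x3 - 1" "m - 2" "\<lambda>k. p (Suc k)"] that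
        by fastforce
      moreover have "p 1 = id"
        using that 3 m by auto
      ultimately show ?thesis
        using infinite_order_conj_cycle[OF b m] p(1) that by simp
    qed
  qed
  show ?thesis
  proof (cases "x2 < x3")
    case True
    then show ?thesis using ordered_case x p by simp
  next
    case False
    then have "x3 < x2" using x(4) by simp
    then show ?thesis using ordered_case[of x3 x2] x p by (simp add: insert_commute)
  qed
qed

lemma infinite_order_cycle_swap_sections:
  assumes b: "directed m b p" and m: "3 \<le> m"
    and x: "x1 \<in> {2..<m}" "x2 \<in> {2..<m}" "x1 \<noteq> x2"
    and p: "p x1 = cyc m \<circ> transpose 0 1" "p x2 = transpose 0 1" "\<forall>x\<in>{1..<m} - {x1, x2}. p x = id"
  shows "infinite_order (b \<circ> rooted m (cyc m))
    \<or> infinite_order (b \<circ> rooted m (transpose 0 1 \<circ> cyc m \<circ> transpose 0 1))"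
proof (cases "x2 < x1")
  case True
  then have "comp_upto p (m - 1) = p x1 \<circ> p x2"
    using x p by (intro comp_upto_two_factors) auto
  then show ?thesis
    using infinite_order_cycle[OF b] m p by (simp add: comp_assoc)
next
  case False
  then have "comp_upto (\<lambda>k. p (Suc k)) (m - 2) = p x2 \<circ> p x1"
    using comp_upto_two_factors[of "x1 - 1" "x2 - 1" "m - 2" "\<lambda>k. p (Suc k)"] x p by fastforce
  moreover have "p 1 = id"
    using x p by auto
  ultimately show ?thesis
    using infinite_order_conj_cycle[OF b m] p by (simp add: comp_assoc)
qed

lemma infinite_order_product_sections:
  assumes b: "directed m b p" and b': "directed m b' p'" and m: "3 \<le> m"
    and x: "x1 \<in> {1..<m}" "x2 \<in> {2..<m}" "x3 \<in> {2..<m}" "x1 \<noteq> x2"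
    and p: "\<forall>x\<in>{1..<m}. p x = (if x = x1 then cyc m else if x = x2 then transpose 0 1 else id)"
    and p': "\<forall>x\<in>{1..<m}. p' x = (if x = x3 then transpose 0 1 else id)"
  shows "infinite_order (b \<circ> b' \<circ> rooted m (cyc m))
    \<or> infinite_order (b \<circ> b' \<circ> rooted m (transpose 0 1 \<circ> cyc m \<circ> transpose 0 1))"
proof -
  let ?q = "\<lambda>x. p x \<circ> p' x"
  have q: "directed m (b \<circ> b') ?q"
    using directed_comp[OF b b'] .
  consider "x3 = x2" | "x3 = x1" | "x3 \<noteq> x1" "x3 \<noteq> x2"
    by blast
  then show ?thesis
  proof cases
    case 1
    then have "infinite_order (b \<circ> b' \<circ> rooted m (cyc m))"
      using x p p' by (intro infinite_order_cycle_section[OF q, of x1]) auto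
    then show ?thesis ..
  next
    case 2
    then show ?thesis
      using x p p' by (intro infinite_order_cycle_swap_sections[OF q m, of x1 x2]) auto
  next
    case 3
    then show ?thesis
      using x p p' by (intro infinite_order_cycle_two_swap_sections[OF q m, of x1 x2 x3]) auto
  qed
qed

lemma gen_generator: "s \<in> S \<Longrightarrow> s \<in> gen S"
  using gen_mult[OF gen_id] by fastforce

lemma exists_infinite_order:
  assumes m: "3 \<le> m"
    and directed: "\<And>s. s \<in> S \<Longrightarrow> directed m s (p s)"
    and S: "b1 \<in> S" "b2 \<in> S" "b3 \<in> S"
    and x: "x1 \<in> {1..<m}" "x2 \<in> {1..<m}" "x3 \<in> {1..<m}"
    and distinct: "(b2, x2) \<noteq> (b3, x3)" "(b1, x1) \<notin> {(b2, x2), (b3, x3)}"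
    and p: "\<And>s x. p s x = (if (s, x) = (b1, x1) then cyc m
      else if (s, x) \<in> {(b2, x2), (b3, x3)} then transpose 0 1 else id)"
  shows "\<exists>b\<in>gen S. \<exists>\<alpha>. \<alpha> permutes {..<m} \<and> infinite_order (b \<circ> rooted m \<alpha>)"
proof -
  have swap: "transpose 0 1 permutes {..<m}"
    using m by (intro permutes_swap_id) auto
  then have "transpose 0 1 \<circ> cyc m \<circ> transpose 0 1 permutes {..<m}"
    using cyc_permutes permutes_compose by blast
  then have witness: "\<exists>b\<in>gen S. \<exists>\<alpha>. \<alpha> permutes {..<m} \<and> infinite_order (b \<circ> rooted m \<alpha>)"
    if "b \<in> gen S" "infinite_order (b \<circ> rooted m (cyc m))
      \<or> infinite_order (b \<circ> rooted m (transpose 0 1))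
      \<or> infinite_order (b \<circ> rooted m (transpose 0 1 \<circ> cyc m \<circ> transpose 0 1))" for b
    using that swap cyc_permutes by blast
  have product: "b \<circ> b' \<in> gen S" if "b \<in> S" "b' \<in> S" for b b'
    using gen_mult[OF gen_generator] that by blast
  consider "x2 = 1 \<or> x3 = 1" | "x2 \<noteq> 1" "x3 \<noteq> 1" "b1 \<noteq> b2" "b1 \<noteq> b3"
    | "x2 \<noteq> 1" "x3 \<noteq> 1" "b1 = b2" "b1 = b3" | "x2 \<noteq> 1" "x3 \<noteq> 1" "b1 = b2" "b1 \<noteq> b3"
    | "x2 \<noteq> 1" "x3 \<noteq> 1" "b1 \<noteq> b2" "b1 = b3"
    by blast
  then show ?thesis
  proof cases
    case 1
    then obtain b where b: "(b, 1) \<in> {(b2, x2), (b3, x3)}" by blast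
    then have "infinite_order (b \<circ> rooted m (transpose 0 1))"
      using m distinct S p by (intro infinite_order_swap[OF directed]) auto
    then show ?thesis using witness b S gen_generator by blast
  next
    case 2
    then have "infinite_order (b1 \<circ> rooted m (cyc m))"
      using m x p by (intro infinite_order_cycle_section[OF directed[OF S(1)], of x1]) auto
    then show ?thesis using witness S gen_generator by blast
  next
    case 3
    then have "infinite_order (b1 \<circ> rooted m (cyc m))
      \<or> infinite_order (b1 \<circ> rooted m (transpose 0 1 \<circ> cyc m \<circ> transpose 0 1))"
      using m x p distinct
      by (intro infinite_order_cycle_two_swap_sections[OF directed[OF S(1)] m, of x1 x2 x3]) auto
    then show ?thesis using witness S gen_generator by blast
  next
    case 4
    then have "infinite_order (b1 \<circ> b3 \<circ> rooted m (cyc m))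
      \<or> infinite_order (b1 \<circ> b3 \<circ> rooted m (transpose 0 1 \<circ> cyc m \<circ> transpose 0 1))"
      using x p distinct
      by (intro infinite_order_product_sections[OF directed[OF S(1)] directed[OF S(3)] m, of x1 x2 x3])
        auto
    then show ?thesis using witness product S by blast
  next
    case 5
    then have "infinite_order (b1 \<circ> b2 \<circ> rooted m (cyc m))
      \<or> infinite_order (b1 \<circ> b2 \<circ> rooted m (transpose 0 1 \<circ> cyc m \<circ> transpose 0 1))"
      using x p distinct
      by (intro infinite_order_product_sections[OF directed[OF S(1)] directed[OF S(2)] m, of x1 x3 x2])
        auto
    then show ?thesis using witness product S by blast
  qed
qed

lemma St1_Cons:
  assumes "b \<in> St1 m" "x < m" "v \<in> words m"
  shows "b (x # v) = x # sec m b [x] v"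
proof -
  have aut: "is_aut m b" and fixes_x: "b [x] = [x]"
    using assms(1,2) by (auto simp: St1_def Aut_def)
  have "\<forall>u\<in>words m. \<forall>v\<in>words m. take (length u) (b (u @ v)) = b u"
    using aut unfolding is_aut_def by blast
  moreover have "[x] \<in> words m"
    using assms(2) by simp
  ultimately have "take (length [x]) (b ([x] @ v)) = b [x]"
    using assms(3) by blast
  then have "take 1 (b (x # v)) = [x]"
    using fixes_x by simp
  then have "b (x # v) = x # drop 1 (b (x # v))"
    by (metis append_Cons append_Nil append_take_drop_id)
  then show ?thesis
    using assms(3) by (simp add: sec_def)
qed

lemma directed_if_sections:
  assumes b: "b \<in> St1 m" and "sec m b [0] = b" "0 < m"
    and "\<forall>x\<in>{1..<m}. sec m b [x] = rooted m (p x)"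
    and "\<forall>x z. z < m \<longrightarrow> p x z < m"
  shows "directed m b p"
proof -
  have "bij_betw b (words m) (words m)" and outside: "\<forall>w. w \<notin> words m \<longrightarrow> b w = w"
    using b by (simp_all add: St1_def Aut_def is_aut_def)
  then have "\<forall>v\<in>words m. b v \<in> words m"
    using bij_betwE by blast
  then show ?thesis
    using assms outside St1_Cons[OF b] by (simp add: directed_def)
qed

lemma a_cyc_eq: "a_cyc m = rooted m (cyc m)"
  by (simp add: a_cyc_def cyc_def)

lemma a_two_eq: "a_two m = rooted m (transpose 0 1)"
  unfolding a_two_def by (rule arg_cong[where f = "rooted m"]) (auto simp: transpose_def)

lemma a_cyc_neq_a_two: "3 \<le> m \<Longrightarrow> a_cyc m \<noteq> a_two m"
  by (auto simp: a_cyc_eq a_two_eq cyc_def dest!: fun_cong[where x = "[1]"])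

lemma sections_configuration:
  assumes m3: "3 \<le> m"
    and S_cyc: "card {(b, x). b \<in> S \<and> x \<in> {1..<m} \<and> sec m b [x] = a_cyc m} = 1"
    and S_two: "card {(b, x). b \<in> S \<and> x \<in> {1..<m} \<and> sec m b [x] = a_two m} = 2"
    and S_triv: "\<forall>b\<in>S. \<forall>x\<in>{1..<m}. sec m b [x] \<noteq> a_cyc m \<and> sec m b [x] \<noteq> a_two m
                    \<longrightarrow> sec m b [x] = id"
  obtains b1 b2 b3 x1 x2 x3
  where "b1 \<in> S" "b2 \<in> S" "b3 \<in> S" "x1 \<in> {1..<m}" "x2 \<in> {1..<m}" "x3 \<in> {1..<m}"
    and "(b2, x2) \<noteq> (b3, x3)" "(b1, x1) \<notin> {(b2, x2), (b3, x3)}"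
    and "\<And>s x. s \<in> S \<Longrightarrow> x \<in> {1..<m} \<Longrightarrow> sec m s [x] = rooted m (if (s, x) = (b1, x1) then cyc m
      else if (s, x) \<in> {(b2, x2), (b3, x3)} then transpose 0 1 else id)"
proof -
  obtain b1 x1 where P1: "{(b, x). b \<in> S \<and> x \<in> {1..<m} \<and> sec m b [x] = a_cyc m} = {(b1, x1)}"
    using S_cyc by (auto simp: card_1_singleton_iff)
  obtain b2 x2 b3 x3 where P2: "{(b, x). b \<in> S \<and> x \<in> {1..<m} \<and> sec m b [x] = a_two m}
      = {(b2, x2), (b3, x3)}" and "(b2, x2) \<noteq> (b3, x3)"
    using S_two by (auto simp: card_2_iff)
  have in_P1: "(s, x) = (b1, x1) \<longleftrightarrow> s \<in> S \<and> x \<in> {1..<m} \<and> sec m s [x] = a_cyc m" for s x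
    using P1 by blast
  have in_P2: "(s, x) \<in> {(b2, x2), (b3, x3)} \<longleftrightarrow> s \<in> S \<and> x \<in> {1..<m} \<and> sec m s [x] = a_two m"
    for s x
    using P2 by blast
  have members: "b1 \<in> S" "b2 \<in> S" "b3 \<in> S" "x1 \<in> {1..<m}" "x2 \<in> {1..<m}" "x3 \<in> {1..<m}"
    using in_P1[of b1 x1] in_P2[of b2 x2] in_P2[of b3 x3] by simp_all
  have "(b1, x1) \<notin> {(b2, x2), (b3, x3)}"
    using in_P1[of b1 x1] in_P2[of b1 x1] a_cyc_neq_a_two[OF m3] by simp
  moreover have "sec m s [x] = rooted m (if (s, x) = (b1, x1) then cyc m
      else if (s, x) \<in> {(b2, x2), (b3, x3)} then transpose 0 1 else id)"
    if "s \<in> S" "x \<in> {1..<m}" for s x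
  proof (cases "(s, x) = (b1, x1)")
    case True
    then show ?thesis using in_P1[of s x] by (simp add: a_cyc_eq)
  next
    case not_P1: False
    show ?thesis
    proof (cases "(s, x) \<in> {(b2, x2), (b3, x3)}")
      case True
      then show ?thesis using not_P1 in_P2[of s x] by (auto simp: a_two_eq)
    next
      case False
      then have "sec m s [x] = id"
        using not_P1 S_triv that in_P1[of s x] in_P2[of s x] by blast
      then show ?thesis using not_P1 False by auto
    qed
  qed
  ultimately show ?thesis
    by (rule that[OF members \<open>(b2, x2) \<noteq> (b3, x3)\<close>])
qed

theorem mainTheorem18:
  fixes m :: nat and S B :: "(nat list \<Rightarrow> nat list) set"
  assumes m3: "m \<ge> 3"
    and B_gen: "B = gen S"
    and B_aut: "B \<subseteq> Aut m"
    and B_St1: "B \<subseteq> St1 m"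
    and B_sec0: "\<forall>b\<in>B. sec m b [0] = b"
    and B_secA: "\<forall>b\<in>B. \<forall>x\<in>{1..<m}. sec m b [x] \<in> SymRooted m"
    and B_secgen: "gen {sec m b [x] | b x. b \<in> B \<and> x \<in> {1..<m}} = SymRooted m"
    and S_cyc: "card {(b, x). b \<in> S \<and> x \<in> {1..<m} \<and> sec m b [x] = a_cyc m} = 1"
    and S_two: "card {(b, x). b \<in> S \<and> x \<in> {1..<m} \<and> sec m b [x] = a_two m} = 2"
    and S_triv: "\<forall>b\<in>S. \<forall>x\<in>{1..<m}. sec m b [x] \<noteq> a_cyc m \<and> sec m b [x] \<noteq> a_two m
                    \<longrightarrow> sec m b [x] = id"
  shows "\<not> periodic (gen (SymRooted m \<union> B))"
proof -
  obtain b1 b2 b3 x1 x2 x3 where S: "b1 \<in> S" "b2 \<in> S" "b3 \<in> S"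
    and x: "x1 \<in> {1..<m}" "x2 \<in> {1..<m}" "x3 \<in> {1..<m}"
    and distinct: "(b2, x2) \<noteq> (b3, x3)" "(b1, x1) \<notin> {(b2, x2), (b3, x3)}"
    and sections: "\<And>s x. s \<in> S \<Longrightarrow> x \<in> {1..<m} \<Longrightarrow> sec m s [x] = rooted m
      (if (s, x) = (b1, x1) then cyc m else if (s, x) \<in> {(b2, x2), (b3, x3)} then transpose 0 1 else id)"
    using sections_configuration[OF m3 S_cyc S_two S_triv] by metis
  define p where "p s x = (if (s, x) = (b1, x1) then cyc m
    else if (s, x) \<in> {(b2, x2), (b3, x3)} then transpose 0 1 else id)" for s x
  have directed: "directed m s (p s)" if "s \<in> S" for s
  proof (rule directed_if_sections)
    have "s \<in> B" using that B_gen gen_generator by blast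
    then show "s \<in> St1 m" "sec m s [0] = s" using B_St1 B_sec0 by auto
    show "0 < m" "\<forall>x\<in>{1..<m}. sec m s [x] = rooted m (p s x)"
      using m3 sections[OF that] by (simp_all add: p_def)
    show "\<forall>x z. z < m \<longrightarrow> p s x z < m"
      using m3 cyc_less by (simp add: p_def transpose_def)
  qed
  obtain b \<alpha> where "b \<in> B" "\<alpha> permutes {..<m}" "infinite_order (b \<circ> rooted m \<alpha>)"
    using exists_infinite_order[OF m3 directed S x distinct p_def] B_gen by blast
  moreover from this have "b \<circ> rooted m \<alpha> \<in> gen (SymRooted m \<union> B)"
    using gen_mult[OF gen_generator, of "rooted m \<alpha>" "SymRooted m \<union> B" b] by (auto simp: SymRooted_def)
  ultimately show ?thesis
    by (auto simp: periodic_def infinite_order_def)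
qed

end
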